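(* Let $q$ be a prime power, $b$ a positive integer, and $M,D$ positive integers with $M>q^b$ and $D\ge b-1$. Then $N_{b+1}(M,D)\le N_b(M,D-1)$.
   Context: For a positive integer $c$ and $\boldsymbol{z}=(z_0,\ldots,z_{n-1}),\boldsymbol{w}\in\mathbb{F}_q^n$, $d_c(\boldsymbol{z},\boldsymbol{w})$ is the number of $i\in\{0,\ldots,n-1\}$ with $(z_i,\ldots,z_{i+c-1})\ne(w_i,\ldots,w_{i+c-1})$ (indices mod $n$). $N_c(M,D)$ is the smallest length $r$ such that there exist $M$ vectors $\boldsymbol{p}_1,\ldots,\boldsymbol{p}_M\in\mathbb{F}_q^r$ with $d_c(\boldsymbol{p}_i,\boldsymbol{p}_j)\ge D$ for all $i\ne j$. *)

theory Defs
  imports Main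
begin

definition dsym :: "nat \<Rightarrow> 'a list \<Rightarrow> 'a list \<Rightarrow> nat" where
  "dsym c z w = (let n = length z in
     card {i. i < n \<and> (\<exists>j<c. z ! ((i + j) mod n) \<noteq> w ! ((i + j) mod n))})"

text \<open>N_c(M,D) over the alphabet 'a (a finite field F_q): least length r admitting
  M distinct vectors in 'a^r with pairwise c-symbol distance at least D.\<close>
definition Nsym :: "'a itself \<Rightarrow> nat \<Rightarrow> nat \<Rightarrow> nat \<Rightarrow> nat" where
  "Nsym _ c M D = (LEAST r. \<exists>p :: nat \<Rightarrow> 'a list.
      (\<forall>i<M. length (p i) = r) \<and> inj_on p {..<M} \<and>
      (\<forall>i<M. \<forall>j<M. i \<noteq> j \<longrightarrow> D \<le> dsym c (p i) (p j)))"

end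

(* Take an optimal code for N_b(M, D - 1), of length r. Since M > q^b, two of its words agree
   in their first b symbols, so the window starting at 0 does not separate them and
   D - 1 <= d_b < r for that pair. Widening the windows from b to b + 1 symbols raises d_b by
   at least one unless it is already r, so every pair of words has
   d_(b+1) >= min (d_b + 1, r) >= D: the same words are a code for N_(b+1)(M, D). *)

theory Submission
  imports Defs
begin

definition dsym_windows :: "nat \<Rightarrow> 'a list \<Rightarrow> 'a list \<Rightarrow> nat set" where
  "dsym_windows c z w =
     {i. i < length z \<and> (\<exists>j<c. z ! ((i + j) mod length z) \<noteq> w ! ((i + j) mod length z))}"

lemma dsym_eq_card_windows: "dsym c z w = card (dsym_windows c z w)"
  by (simp add: dsym_def dsym_windows_def Let_def)

lemma dsym_windows_subset: "dsym_windows c z w \<subseteq> {..<length z}"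
  by (auto simp: dsym_windows_def)

lemma finite_dsym_windows [simp]: "finite (dsym_windows c z w)"
  using finite_subset[OF dsym_windows_subset] by blast

lemma dsym_le_length: "dsym c z w \<le> length z"
  unfolding dsym_eq_card_windows
  using card_mono[OF finite_lessThan dsym_windows_subset] by simp

lemma dsym_self [simp]: "dsym c z z = 0"
  by (simp add: dsym_def)

lemma dsym_windows_mono: "c \<le> c' \<Longrightarrow> dsym_windows c z w \<subseteq> dsym_windows c' z w"
  unfolding dsym_windows_def by (blast intro: less_le_trans)

lemma dsym_mono: "c \<le> c' \<Longrightarrow> dsym c z w \<le> dsym c' z w"
  unfolding dsym_eq_card_windows by (intro card_mono dsym_windows_mono) auto

lemma cyclic_boundary_exists:
  assumes "S \<subseteq> {..<n}" "k \<in> S" "i0 < n" "i0 \<notin> S"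
  shows "\<exists>i<n. i \<notin> S \<and> Suc i mod n \<in> S"
proof (rule ccontr)
  assume closed: "\<not> ?thesis"
  have "(i0 + m) mod n \<notin> S" for m
  proof (induction m)
    case 0
    then show ?case using assms(3,4) by simp
  next
    case (Suc m)
    have "(i0 + m) mod n < n" using assms(3) by simp
    with closed Suc have "Suc ((i0 + m) mod n) mod n \<notin> S" by blast
    then show ?case by (simp add: mod_Suc_eq)
  qed
  moreover have "k < n" using assms(1,2) by auto
  then have "(i0 + (k + n - i0)) mod n = k" using assms(3) by simp
  ultimately show False using assms(2) by metis
qed

text \<open>Unless every window already differs, some window not counted by dsym c is followed
  cyclically by a counted one; extending windows by one symbol brings it in.\<close>
lemma dsym_Suc_gt:
  assumes "length w = length z" "z \<noteq> w" "0 < c" "dsym c z w < length z"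
  shows "dsym c z w < dsym (Suc c) z w"
proof -
  let ?n = "length z" and ?S = "dsym_windows c z w"
  obtain k where k: "k < ?n" "z ! k \<noteq> w ! k" using assms(1,2) nth_equalityI by metis
  have "k \<in> ?S" using k assms(3) by (auto simp: dsym_windows_def intro!: exI[of _ 0])
  moreover have "?S \<noteq> {..<?n}"
    using assms(4) unfolding dsym_eq_card_windows by (metis card_lessThan less_irrefl)
  then obtain i0 where "i0 < ?n" "i0 \<notin> ?S"
    using dsym_windows_subset by blast
  ultimately obtain i where i: "i < ?n" "i \<notin> ?S" "Suc i mod ?n \<in> ?S"
    using cyclic_boundary_exists[OF dsym_windows_subset] by blast
  from i(3) obtain j where j: "j < c"
    "z ! ((Suc i mod ?n + j) mod ?n) \<noteq> w ! ((Suc i mod ?n + j) mod ?n)"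
    by (auto simp: dsym_windows_def)
  moreover have "(Suc i mod ?n + j) mod ?n = (i + Suc j) mod ?n"
    by (simp add: mod_add_left_eq)
  ultimately have "i \<in> dsym_windows (Suc c) z w"
    using i(1) by (auto simp: dsym_windows_def intro!: exI[of _ "Suc j"])
  then have "?S \<subset> dsym_windows (Suc c) z w"
    using dsym_windows_mono[of c "Suc c" z w] i(2) by auto
  then show ?thesis unfolding dsym_eq_card_windows by (intro psubset_card_mono) auto
qed

lemma dsym_common_prefix_lt:
  assumes "length w = length z" "take c z = take c w" "z \<noteq> w"
  shows "dsym c z w < length z"
proof -
  have "c < length z"
    using assms by (metis linorder_not_less take_all)
  have "0 \<notin> dsym_windows c z w"
  proof
    assume "0 \<in> dsym_windows c z w"
    then obtain j where "j < c" "z ! j \<noteq> w ! j"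
      using \<open>c < length z\<close> by (auto simp: dsym_windows_def)
    then show False using assms(2) by (metis nth_take)
  qed
  then have "dsym_windows c z w \<subseteq> {..<length z} - {0}"
    using dsym_windows_subset by blast
  then have "dsym c z w \<le> card ({..<length z} - {0})"
    unfolding dsym_eq_card_windows by (intro card_mono) auto
  also have "\<dots> = length z - 1"
    using \<open>c < length z\<close> by (subst card_Diff_singleton) auto
  finally show ?thesis using \<open>c < length z\<close> by linarith
qed

definition hamming_dist :: "'a list \<Rightarrow> 'a list \<Rightarrow> nat" where
  "hamming_dist z w = card {k. k < length z \<and> z ! k \<noteq> w ! k}"

lemma hamming_dist_le_dsym:
  assumes "0 < c"
  shows "hamming_dist z w \<le> dsym c z w"
  unfolding hamming_dist_def dsym_eq_card_windows
  using assms by (intro card_mono) (auto simp: dsym_windows_def intro!: exI[of _ 0])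

text \<open>Each of the k periods of the repeated words contains a position where u and v differ.\<close>
lemma hamming_dist_repeat_ge:
  assumes "length u = L" "length v = L" "u \<noteq> v"
  shows "k \<le> hamming_dist (map (\<lambda>i. u ! (i mod L)) [0..<k * L])
                            (map (\<lambda>i. v ! (i mod L)) [0..<k * L])"
proof -
  obtain t where t: "t < L" "u ! t \<noteq> v ! t" using assms nth_equalityI by metis
  have "t + m * L < k * L" if "m < k" for m
  proof -
    have "t + m * L < Suc m * L" using t by simp
    also have "\<dots> \<le> k * L" using that by (intro mult_le_mono1) simp
    finally show ?thesis .
  qed
  then have "(\<lambda>m. t + m * L) ` {..<k} \<subseteq>
      {i. i < k * L \<and> u ! (i mod L) \<noteq> v ! (i mod L)}"
    using t by auto
  then have "card ((\<lambda>m. t + m * L) ` {..<k}) \<le>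
      hamming_dist (map (\<lambda>i. u ! (i mod L)) [0..<k * L]) (map (\<lambda>i. v ! (i mod L)) [0..<k * L])"
    unfolding hamming_dist_def by (intro card_mono) auto
  moreover have "inj_on (\<lambda>m. t + m * L) {..<k}"
    using t by (auto simp: inj_on_def)
  ultimately show ?thesis by (simp add: card_image)
qed

definition sym_code :: "nat \<Rightarrow> nat \<Rightarrow> nat \<Rightarrow> nat \<Rightarrow> (nat \<Rightarrow> 'a list) \<Rightarrow> bool" where
  "sym_code c M D r p \<longleftrightarrow> (\<forall>i<M. length (p i) = r) \<and> inj_on p {..<M} \<and>
      (\<forall>i<M. \<forall>j<M. i \<noteq> j \<longrightarrow> D \<le> dsym c (p i) (p j))"

lemma Nsym_eq_Least: "Nsym TYPE('a) c M D = (LEAST r. \<exists>p :: nat \<Rightarrow> 'a list. sym_code c M D r p)"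
  by (simp add: Nsym_def sym_code_def)

lemma Nsym_le: "sym_code c M D r (p :: nat \<Rightarrow> 'a list) \<Longrightarrow> Nsym TYPE('a) c M D \<le> r"
  unfolding Nsym_eq_Least by (rule Least_le) blast

lemma sym_code_Nsym:
  assumes "sym_code c M D r (p :: nat \<Rightarrow> 'a list)"
  obtains p' :: "nat \<Rightarrow> 'a list" where "sym_code c M D (Nsym TYPE('a) c M D) p'"
  using LeastI_ex[of "\<lambda>r. \<exists>p :: nat \<Rightarrow> 'a list. sym_code c M D r p"] assms
  unfolding Nsym_eq_Least by blast

lemma card_lists_length_UNIV: "card {xs :: 'a::finite list. length xs = n} = card (UNIV :: 'a set) ^ n"
  using card_lists_length_eq[of "UNIV :: 'a set" n] by simp

lemma sym_code_exists:
  assumes "0 < c" "2 \<le> card (UNIV :: 'a set)"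
  shows "\<exists>r (p :: nat \<Rightarrow> 'a::finite list). sym_code c M D r p"
proof -
  have "M < 2 ^ M" by (rule less_exp)
  also have "\<dots> \<le> card (UNIV :: 'a set) ^ M" using assms(2) by (intro power_mono) auto
  finally have "card {..<M} \<le> card {xs :: 'a list. length xs = M}"
    by (simp add: card_lists_length_UNIV)
  then obtain u where u: "u ` {..<M} \<subseteq> {xs :: 'a list. length xs = M}" "inj_on u {..<M}"
    using card_le_inj[OF finite_lessThan finite_list_length] by blast
  define p where "p i = map (\<lambda>k. u i ! (k mod M)) [0..<Suc D * M]" for i
  have dist: "Suc D \<le> dsym c (p i) (p j)" if "i < M" "j < M" "i \<noteq> j" for i j
  proof -
    have "u i \<noteq> u j" using u(2) that by (auto dest: inj_onD)
    then have "Suc D \<le> hamming_dist (p i) (p j)"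
      unfolding p_def using u(1) that by (intro hamming_dist_repeat_ge) auto
    also have "\<dots> \<le> dsym c (p i) (p j)" by (rule hamming_dist_le_dsym[OF assms(1)])
    finally show ?thesis .
  qed
  have "inj_on p {..<M}"
  proof (rule inj_onI)
    fix i j assume "i \<in> {..<M}" "j \<in> {..<M}" "p i = p j"
    then show "i = j" using dist[of i j] by (cases "i = j") auto
  qed
  with dist have "sym_code c M D (Suc D * M) p"
    unfolding sym_code_def p_def by (auto intro: Suc_leD)
  then show ?thesis by blast
qed

lemma sym_code_common_prefix:
  fixes p :: "nat \<Rightarrow> 'a::finite list"
  assumes "sym_code c M D r p" "card (UNIV :: 'a set) ^ c < M"
  obtains i j where "i < M" "j < M" "i \<noteq> j" "take c (p i) = take c (p j)"
proof -
  have "\<not> inj_on (\<lambda>i. take c (p i)) {..<M}"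
  proof
    assume inj: "inj_on (\<lambda>i. take c (p i)) {..<M}"
    have "(\<lambda>i. take c (p i)) ` {..<M} \<subseteq> {xs :: 'a list. length xs = min r c}"
      using assms(1) by (auto simp: sym_code_def)
    with inj have "M \<le> card {xs :: 'a list. length xs = min r c}"
      using card_inj_on_le[OF inj _ finite_list_length] by simp
    also have "\<dots> = card (UNIV :: 'a set) ^ min r c"
      by (rule card_lists_length_UNIV)
    also have "\<dots> \<le> card (UNIV :: 'a set) ^ c"
      by (intro power_increasing) (simp_all add: Suc_le_eq finite_UNIV_card_ge_0)
    finally show False using assms(2) by simp
  qed
  then show ?thesis using that unfolding inj_on_def by blast
qed

lemma sym_code_distance_lt_length:
  fixes p :: "nat \<Rightarrow> 'a::finite list"
  assumes "sym_code c M D r p" "card (UNIV :: 'a set) ^ c < M"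
  shows "D < r"
proof -
  obtain i j where ij: "i < M" "j < M" "i \<noteq> j" "take c (p i) = take c (p j)"
    using sym_code_common_prefix[OF assms] .
  then have "p i \<noteq> p j" "length (p i) = r" "length (p j) = r" "D \<le> dsym c (p i) (p j)"
    using assms(1) by (auto simp: sym_code_def dest: inj_onD)
  with ij(4) show ?thesis using dsym_common_prefix_lt[of "p j" "p i" c] by simp
qed

lemma sym_code_Suc:
  assumes "sym_code c M D r p" "0 < c" "D < r"
  shows "sym_code (Suc c) M (Suc D) r p"
  unfolding sym_code_def
proof (intro conjI allI impI)
  fix i j assume ij: "i < M" "j < M" "i \<noteq> j"
  then have "p i \<noteq> p j" "length (p i) = r" "length (p j) = r" "D \<le> dsym c (p i) (p j)"
    using assms(1) by (auto simp: sym_code_def dest: inj_onD)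
  then show "Suc D \<le> dsym (Suc c) (p i) (p j)"
    using dsym_Suc_gt[of "p j" "p i" c] assms(2,3) dsym_le_length[of c "p i" "p j"]
      dsym_mono[of c "Suc c" "p i" "p j"]
    by (cases "dsym c (p i) (p j) < r") auto
qed (use assms(1) in \<open>auto simp: sym_code_def\<close>)

lemma card_field_ge_2: "2 \<le> card (UNIV :: 'a::{field,finite} set)"
proof -
  have "card {0 :: 'a, 1} \<le> card (UNIV :: 'a set)" by (intro card_mono) auto
  then show ?thesis by simp
qed

theorem mainTheorem9:
  fixes b M D :: nat
  assumes "0 < b" and "0 < M" and "0 < D"
    and "card (UNIV :: 'a set) ^ b < M"
    and "b - 1 \<le> D"
  shows "Nsym TYPE('a::{field,finite}) (b + 1) M D \<le> Nsym TYPE('a) b M (D - 1)"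
proof -
  obtain p :: "nat \<Rightarrow> 'a list" where opt: "sym_code b M (D - 1) (Nsym TYPE('a) b M (D - 1)) p"
    using sym_code_exists[OF assms(1) card_field_ge_2] sym_code_Nsym by metis
  then have "D - 1 < Nsym TYPE('a) b M (D - 1)"
    using sym_code_distance_lt_length assms(4) by blast
  then have "sym_code (b + 1) M D (Nsym TYPE('a) b M (D - 1)) p"
    using sym_code_Suc[OF opt assms(1)] assms(3) by simp
  then show ?thesis by (rule Nsym_le)
qed

end
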